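(* For a ReLU MLP with parameter vector $w\in\mathbb{R}^p$, define $B=\{w_0\in\mathbb{R}^p : \text{there exist a hidden neuron }(l,i),\ 1\le l\le L,\ 1\le i\le n_l,\ \text{and a nonempty open set } \mathcal{U}\subseteq\mathbb{R}^{n_0} \text{ with } z_l(x;w_0)_i=0 \text{ for all } x\in\mathcal{U}\}$. Then $B$ has Lebesgue measure zero in $\mathbb{R}^p$.
   Context: A ReLU multilayer perceptron (MLP) with $L$ hidden layers and widths $n_0,n_1,\dots,n_L,n_{L+1}$ has parameters $w=(W_0,b_0,W_1,b_1,\dots,W_L,b_L)\in\mathbb{R}^p$ with $W_l\in\mathbb{R}^{n_{l+1}\times n_l}$, $b_l\in\mathbb{R}^{n_{l+1}}$ (all entries concatenated into one vector of length $p$). For $x\in\mathbb{R}^{n_0}$ set $h_0(x;w)=x$ and for $l=1,\dots,L$ define the pre-activations $z_l(x;w)=W_{l-1}h_{l-1}(x;w)+b_{l-1}\in\mathbb{R}^{n_l}$ and activations $h_l(x;w)=\sigma(z_l(x;w))$, where $\sigma(t)=\max(t,0)$ is applied elementwise; the output is $f(x;w)=W_Lh_L(x;w)+b_L$. *)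

theory Defs
  imports "HOL-Analysis.Analysis"
begin

text \<open>Parameter indices: Inl (l,i,j) is entry (i,j) of W_l, Inr (l,i) is entry i of b_l
  (0-based row/column indices).  Widths are n :: nat \<Rightarrow> nat, with n l the width of layer l.\<close>

type_synonym param_idx = "(nat \<times> nat \<times> nat) + (nat \<times> nat)"

definition mlp_params :: "(nat \<Rightarrow> nat) \<Rightarrow> nat \<Rightarrow> param_idx set" where
  "mlp_params n L =
     {Inl (l, i, j) | l i j. l \<le> L \<and> i < n (Suc l) \<and> j < n l} \<union>
     {Inr (l, i) | l i. l \<le> L \<and> i < n (Suc l)}"

fun mlp_h :: "(nat \<Rightarrow> nat) \<Rightarrow> (param_idx \<Rightarrow> real) \<Rightarrow> (nat \<Rightarrow> real) \<Rightarrow> nat \<Rightarrow> nat \<Rightarrow> real" where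
  "mlp_h n w x 0 = x"
| "mlp_h n w x (Suc l) =
     (\<lambda>i. max ((\<Sum>j<n l. w (Inl (l, i, j)) * mlp_h n w x l j) + w (Inr (l, i))) 0)"

text \<open>Pre-activations z_l(x;w) for l \<ge> 1: z_{l+1} = W_l h_l + b_l.\<close>
definition mlp_z :: "(nat \<Rightarrow> nat) \<Rightarrow> (param_idx \<Rightarrow> real) \<Rightarrow> (nat \<Rightarrow> real) \<Rightarrow> nat \<Rightarrow> nat \<Rightarrow> real" where
  "mlp_z n w x l i = (\<Sum>j<n (l - 1). w (Inl (l - 1, i, j)) * mlp_h n w x (l - 1) j) + w (Inr (l - 1, i))"

definition mlp_bad_set :: "(nat \<Rightarrow> nat) \<Rightarrow> nat \<Rightarrow> (param_idx \<Rightarrow> real) set" where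
  "mlp_bad_set n L =
     {w \<in> PiE (mlp_params n L) (\<lambda>_. UNIV).
        \<exists>l i U. 1 \<le> l \<and> l \<le> L \<and> i < n l \<and> U \<noteq> {} \<and>
          openin (Euclidean_space (n 0)) U \<and> (\<forall>x\<in>U. mlp_z n w x l i = 0)}"

end

theory Submission
  imports Defs
begin

text \<open>The pre-activation z_l(x;w)_i is the bias entry (b_{l-1})_i plus a term that does not
  depend on that entry, so for fixed x the parameters with z_l(x;w)_i = 0 form a null set by
  Fubini. If z_l(.;w)_i vanishes on a nonempty open set of inputs, it vanishes at some point of a
  fixed countable set that is dense in every Euclidean space; hence B lies in a countable union
  of such null sets.\<close>

definition truncate_coords :: "nat \<Rightarrow> (nat \<Rightarrow> real) \<Rightarrow> nat \<Rightarrow> real" where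
  "truncate_coords m x = (\<lambda>i. if i < m then x i else 0)"

lemma continuous_on_truncate_coords: "continuous_on UNIV (truncate_coords m)"
  unfolding truncate_coords_def
proof (intro continuous_on_coordinatewise_then_product)
  show "continuous_on UNIV (\<lambda>x. if i < m then x i else 0)" for i
    by (cases "i < m") (simp_all add: continuous_on_component)
qed

lemma truncate_coords_in_topspace: "truncate_coords m x \<in> topspace (Euclidean_space m)"
  by (simp add: topspace_Euclidean_space truncate_coords_def)

lemma truncate_coords_fixes_topspace:
  "x \<in> topspace (Euclidean_space m) \<Longrightarrow> truncate_coords m x = x"
  by (auto simp: topspace_Euclidean_space truncate_coords_def)

lemma openin_Euclidean_space_iff:
  "openin (Euclidean_space m) U \<longleftrightarrow> (\<exists>T. open T \<and> U = T \<inter> topspace (Euclidean_space m))"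
  by (simp add: Euclidean_space_def openin_subtopology euclidean_product_topology Int_commute)

lemma countable_dense_Euclidean_spaces:
  obtains D :: "(nat \<Rightarrow> real) set"
  where "countable D" "\<And>m U. openin (Euclidean_space m) U \<Longrightarrow> U \<noteq> {} \<Longrightarrow> D \<inter> U \<noteq> {}"
proof -
  obtain D0 :: "(nat \<Rightarrow> real) set"
    where "countable D0" and D0: "\<And>X. open X \<Longrightarrow> X \<noteq> {} \<Longrightarrow> \<exists>d\<in>D0. d \<in> X"
    using countable_dense_exists by blast
  define D where "D = (\<Union>m. truncate_coords m ` D0)"
  show ?thesis
  proof
    show "countable D"
      unfolding D_def using \<open>countable D0\<close> by auto
    fix m U
    assume "openin (Euclidean_space m) U" "U \<noteq> {}"
    then obtain T x where T: "open T" "U = T \<inter> topspace (Euclidean_space m)" and "x \<in> U"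
      by (auto simp: openin_Euclidean_space_iff)
    have "open (truncate_coords m -` T)"
      using \<open>open T\<close> by (intro open_vimage continuous_on_truncate_coords)
    moreover have "x \<in> truncate_coords m -` T"
      using \<open>x \<in> U\<close> T(2) truncate_coords_fixes_topspace by auto
    ultimately obtain d where "d \<in> D0" "truncate_coords m d \<in> T"
      using D0 by blast
    then have "truncate_coords m d \<in> D \<inter> U"
      using T(2) truncate_coords_in_topspace unfolding D_def by blast
    then show "D \<inter> U \<noteq> {}"
      by blast
  qed
qed

lemma (in product_sigma_finite) null_sets_PiM_if_fibres_null:
  assumes "finite I" "k \<in> I" "N \<in> sets (PiM I M)"
    and fibres_null: "\<And>w. {y \<in> space (M k). w(k := y) \<in> N} \<in> null_sets (M k)"
  shows "N \<in> null_sets (PiM I M)"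
proof -
  define J where "J = I - {k}"
  have I: "I = insert k J" "k \<notin> J" "finite J"
    using assms(1,2) unfolding J_def by auto
  have fibre_integral:
    "(\<integral>\<^sup>+ y. indicator N (w(k := y)) \<partial>M k) = emeasure (M k) {y \<in> space (M k). w(k := y) \<in> N}"
    for w
  proof -
    have "(\<integral>\<^sup>+ y. indicator N (w(k := y)) \<partial>M k)
        = (\<integral>\<^sup>+ y. indicator {y \<in> space (M k). w(k := y) \<in> N} y \<partial>M k)"
      by (intro nn_integral_cong) (auto simp: indicator_def)
    then show ?thesis
      using null_setsD2[OF fibres_null[of w]] by simp
  qed
  have "emeasure (PiM I M) N = (\<integral>\<^sup>+ w. indicator N w \<partial>PiM I M)"
    using assms(3) by simp
  also have "\<dots> = (\<integral>\<^sup>+ w. (\<integral>\<^sup>+ y. indicator N (w(k := y)) \<partial>M k) \<partial>PiM J M)"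
    unfolding I(1) using I(2,3) assms(3) by (intro product_nn_integral_insert) (auto simp: I(1))
  also have "\<dots> = 0"
    by (simp add: fibre_integral null_setsD1[OF fibres_null])
  finally show ?thesis
    using assms(3) by (intro null_setsI)
qed

text \<open>No hypothesis k \<in> I: the recursion for mlp_h also reads entries outside mlp_params.\<close>

lemma borel_measurable_PiM_component:
  "(\<lambda>w. w k) \<in> borel_measurable (PiM I (\<lambda>_. lborel :: 'a::euclidean_space measure))"
  (is "_ \<in> borel_measurable ?P")
proof (cases "k \<in> I")
  case True
  then show ?thesis
    using measurable_component_singleton[of k I "\<lambda>_. lborel :: 'a measure"] by simp
next
  case False
  have "w k = undefined" if "w \<in> space ?P" for w
    using that False unfolding space_PiM by (rule PiE_arb)
  then have "(\<lambda>w. w k) \<in> borel_measurable ?P \<longleftrightarrow> (\<lambda>_. undefined :: 'a) \<in> borel_measurable ?P"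
    by (rule measurable_cong)
  then show ?thesis
    by simp
qed

lemma borel_measurable_mlp_h:
  "(\<lambda>w. mlp_h n w x l j) \<in> borel_measurable (PiM I (\<lambda>_. lborel))"
proof (induction l arbitrary: j)
  case 0
  then show ?case by simp
next
  case (Suc l)
  note [measurable] = borel_measurable_PiM_component Suc.IH
  show ?case by simp measurable
qed

lemma borel_measurable_mlp_z:
  "(\<lambda>w. mlp_z n w x l i) \<in> borel_measurable (PiM I (\<lambda>_. lborel))"
  using borel_measurable_PiM_component borel_measurable_mlp_h
  unfolding mlp_z_def by measurable

lemma mlp_h_fun_upd_bias: "m \<le> l \<Longrightarrow> mlp_h n (w(Inr (l, i) := y)) x m = mlp_h n w x m"
  by (induction m) auto

lemma mlp_z_fun_upd_bias:
  "mlp_z n (w(Inr (l, i) := y)) x (Suc l) i = mlp_z n w x (Suc l) i - w (Inr (l, i)) + y"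
  by (simp add: mlp_z_def mlp_h_fun_upd_bias)

lemma null_sets_mlp_z_eq_0:
  assumes "finite I" "Inr (l, i) \<in> I"
  shows "{w \<in> space (PiM I (\<lambda>_. lborel)). mlp_z n w x (Suc l) i = 0} \<in> null_sets (PiM I (\<lambda>_. lborel))"
    (is "?N \<in> null_sets ?M")
proof -
  interpret product_sigma_finite "\<lambda>_. lborel :: real measure"
    by standard
  have "?N \<in> sets ?M"
    using borel_measurable_mlp_z by measurable
  moreover have "{y \<in> space lborel. w(Inr (l, i) := y) \<in> ?N} \<in> null_sets lborel" for w
  proof (rule finite_imp_null_set_lborel, rule finite_subset)
    show "{y \<in> space lborel. w(Inr (l, i) := y) \<in> ?N} \<subseteq> {w (Inr (l, i)) - mlp_z n w x (Suc l) i}"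
      by (auto simp: mlp_z_fun_upd_bias)
  qed simp
  ultimately show ?thesis
    by (rule null_sets_PiM_if_fibres_null[OF assms])
qed

lemma finite_mlp_params: "finite (mlp_params n L)"
proof (rule finite_subset)
  show "mlp_params n L \<subseteq> Inl ` (SIGMA l:{..L}. {..<n (Suc l)} \<times> {..<n l}) \<union> Inr ` (SIGMA l:{..L}. {..<n (Suc l)})"
    unfolding mlp_params_def by auto
qed auto

lemma bias_in_mlp_params: "l \<le> L \<Longrightarrow> i < n (Suc l) \<Longrightarrow> Inr (l, i) \<in> mlp_params n L"
  by (simp add: mlp_params_def)

theorem mainTheorem2:
  fixes n :: "nat \<Rightarrow> nat" and L :: nat
  assumes "\<forall>l\<le>Suc L. n l \<ge> 1"
  shows "mlp_bad_set n L \<in> null_sets (completion (PiM (mlp_params n L) (\<lambda>_. lborel)))"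
proof -
  let ?M = "PiM (mlp_params n L) (\<lambda>_. lborel :: real measure)"
  obtain D where "countable D"
    and D: "\<And>U. openin (Euclidean_space (n 0)) U \<Longrightarrow> U \<noteq> {} \<Longrightarrow> D \<inter> U \<noteq> {}"
    using countable_dense_Euclidean_spaces by metis
  define N where "N l i d = {w \<in> space ?M. mlp_z n w d (Suc l) i = 0}" for l i d
  have "mlp_bad_set n L \<subseteq> (\<Union>l<L. \<Union>i<n (Suc l). \<Union>d\<in>D. N l i d)"
  proof
    fix w
    assume "w \<in> mlp_bad_set n L"
    then obtain l' i U where "1 \<le> l'" "l' \<le> L" "i < n l'" "w \<in> space ?M"
      and U: "openin (Euclidean_space (n 0)) U" "U \<noteq> {}" "\<forall>x\<in>U. mlp_z n w x l' i = 0"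
      unfolding mlp_bad_set_def space_PiM space_lborel space_borel by blast
    moreover obtain l where "l' = Suc l"
      using \<open>1 \<le> l'\<close> by (cases l') auto
    moreover obtain d where "d \<in> D" "d \<in> U"
      using D[OF U(1,2)] by blast
    ultimately have "w \<in> N l i d" "l < L" "i < n (Suc l)"
      unfolding N_def by auto
    then show "w \<in> (\<Union>l<L. \<Union>i<n (Suc l). \<Union>d\<in>D. N l i d)"
      using \<open>d \<in> D\<close> by blast
  qed
  moreover have "(\<Union>l<L. \<Union>i<n (Suc l). \<Union>d\<in>D. N l i d) \<in> null_sets ?M"
    unfolding N_def using \<open>countable D\<close>
    by (intro null_sets_UN' null_sets_mlp_z_eq_0 finite_mlp_params bias_in_mlp_params) auto
  ultimately show ?thesis
    by (meson null_sets_completionI null_sets_completion_subset)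
qed

end
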